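(* $2^5\rightarrow 167\rightrightarrows 19$: there is an injective isotone map $\varphi:\mathbf 2^5\to F_4^-$ such that $\{\varphi(x)[p_1:=e]: x\in\mathbf 2^5,\ e\in\{0,1\}\}\supseteq F_3^-$.
   Context: $F_k$ is the set of monotone Boolean functions of $k$ variables $p_1,\dots,p_k$ (including constants $0,1$), ordered pointwise; $F_k^-=F_k\setminus\{0\}$. For $g\in F_k$ and $e\in\{0,1\}$, $g[p_1:=e]$ is the function of $p_2,\dots,p_k$ obtained by substituting $e$ for $p_1$. $\mathbf 2^i$ is $\{0,1\}^i$ with the coordinatewise order; isotone means order-preserving. Notation: $2^i\rightarrow|F_j^-|\rightrightarrows|F_{j-1}^-|$ means there is an injective isotone $\varphi:\mathbf 2^i\to F_j^-$ such that every element of $F_{j-1}^-$ equals $\varphi(x)[p_1:=e]$ for some $x$, $e$. Here $|F_3^-|=19$, $|F_4^-|=167$. *)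

theory Defs
  imports Main
begin

text \<open>Boolean functions of the variables p_1,...,p_k are represented as functions
  on assignments (nat \<Rightarrow> bool), variable p_(i+1) being coordinate i,
  that depend only on the coordinates 0,...,k-1.  Two such functions are equal iff
  they agree on all assignments, and the HOL order on functions is the pointwise order.\<close>

definition depends_only :: "nat \<Rightarrow> ((nat \<Rightarrow> bool) \<Rightarrow> bool) \<Rightarrow> bool" where
  "depends_only k f \<longleftrightarrow> (\<forall>a b. (\<forall>i<k. a i = b i) \<longrightarrow> f a = f b)"

definition monotone_bf :: "((nat \<Rightarrow> bool) \<Rightarrow> bool) \<Rightarrow> bool" where
  "monotone_bf f \<longleftrightarrow> (\<forall>a b. (\<forall>i. a i \<le> b i) \<longrightarrow> f a \<le> f b)"

definition F :: "nat \<Rightarrow> ((nat \<Rightarrow> bool) \<Rightarrow> bool) set" where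
  "F k = {f. depends_only k f \<and> monotone_bf f}"

definition Fminus :: "nat \<Rightarrow> ((nat \<Rightarrow> bool) \<Rightarrow> bool) set" where
  "Fminus k = F k - {(\<lambda>_. False)}"

text \<open>g[p_1 := e], viewed as a function of p_2,...,p_k (reindexed to p_1,...,p_(k-1)).\<close>
definition subst1 :: "((nat \<Rightarrow> bool) \<Rightarrow> bool) \<Rightarrow> bool \<Rightarrow> ((nat \<Rightarrow> bool) \<Rightarrow> bool)" where
  "subst1 g e = (\<lambda>a. g (\<lambda>i. if i = 0 then e else a (i - 1)))"

definition cube :: "nat \<Rightarrow> bool list set" where
  "cube i = {xs. length xs = i}"

definition cube_le :: "bool list \<Rightarrow> bool list \<Rightarrow> bool" where
  "cube_le xs ys \<longleftrightarrow> list_all2 (\<le>) xs ys"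

text \<open>2^i \<rightarrow> |F_j^-| \<rightrightarrows> |F_(j-1)^-|\<close>
definition arrow :: "nat \<Rightarrow> nat \<Rightarrow> bool" where
  "arrow i j \<longleftrightarrow> (\<exists>\<phi>. inj_on \<phi> (cube i) \<and> \<phi> ` cube i \<subseteq> Fminus j
      \<and> (\<forall>x\<in>cube i. \<forall>y\<in>cube i. cube_le x y \<longrightarrow> \<phi> x \<le> \<phi> y)
      \<and> Fminus (j - 1) \<subseteq> {subst1 (\<phi> x) e | x e. x \<in> cube i})"

end

theory Submission
  imports Defs
begin

text \<open>A Boolean function of k variables is stored as its truth table, a list of length 2^k whose
  first half is the table of f[p_1:=0] and whose second half is the table of f[p_1:=1]. Then
  substituting for p_1 just selects a half, and monotonicity becomes the recursive condition that
  both halves are monotone and the first lies pointwise below the second. The embedding is given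
  by 32 truth tables of monotone functions of 4 variables, arranged over 2^5 by the same recursive
  scheme; isotonicity, injectivity and the fact that the halves of these tables exhaust the 19 nonzero
  monotone functions of 3 variables are then finite checks on lists.\<close>

definition table_half :: "nat \<Rightarrow> bool \<Rightarrow> 'a list \<Rightarrow> 'a list" where
  "table_half k e t = (if e then drop (2^k) t else take (2^k) t)"

primrec table_fun :: "nat \<Rightarrow> 'a list \<Rightarrow> (nat \<Rightarrow> bool) \<Rightarrow> 'a" where
  "table_fun 0 t a = hd t"
| "table_fun (Suc k) t a = table_fun k (table_half k (a 0) t) (a \<circ> Suc)"

primrec table_of :: "nat \<Rightarrow> ((nat \<Rightarrow> bool) \<Rightarrow> bool) \<Rightarrow> bool list" where
  "table_of 0 f = [f (\<lambda>_. False)]"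
| "table_of (Suc k) f = table_of k (subst1 f False) @ table_of k (subst1 f True)"

primrec monotone_table :: "('a \<Rightarrow> 'a \<Rightarrow> bool) \<Rightarrow> nat \<Rightarrow> 'a list \<Rightarrow> bool" where
  "monotone_table R 0 t \<longleftrightarrow> True"
| "monotone_table R (Suc k) t \<longleftrightarrow>
     monotone_table R k (table_half k False t) \<and> monotone_table R k (table_half k True t)
     \<and> list_all2 R (table_half k False t) (table_half k True t)"

lemma length_table_half: "length t = 2 ^ Suc k \<Longrightarrow> length (table_half k e t) = 2^k"
  by (simp add: table_half_def)

lemma set_table_half_subset: "set (table_half k e t) \<subseteq> set t"
  by (simp add: table_half_def set_take_subset set_drop_subset)

lemma table_halves_append: "table_half k False t @ table_half k True t = t"
  by (simp add: table_half_def)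

lemma set_table_halves: "set t = set (table_half k False t) \<union> set (table_half k True t)"
  by (simp flip: set_append add: table_halves_append)

lemma table_fun_in_set: "length t = 2^k \<Longrightarrow> table_fun k t a \<in> set t"
proof (induction k arbitrary: t a)
  case 0
  then show ?case by (cases t) auto
next
  case (Suc k)
  have "table_fun k (table_half k (a 0) t) (a \<circ> Suc) \<in> set (table_half k (a 0) t)"
    by (rule Suc.IH) (simp add: length_table_half Suc.prems)
  then show ?case using set_table_half_subset[of k "a 0" t] by auto
qed

lemma table_fun_surj:
  assumes "length t = 2^k" "u \<in> set t"
  shows "\<exists>xs. length xs = k \<and> table_fun k t (nth xs) = u"
  using assms
proof (induction k arbitrary: t)
  case 0
  then have "t = [u]" by (auto simp: length_Suc_conv)
  then have "length [] = 0 \<and> table_fun 0 t (nth []) = u" by simp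
  then show ?case by (rule exI)
next
  case (Suc k)
  have "u \<in> set (table_half k False t) \<union> set (table_half k True t)"
    using Suc.prems(2) by (simp only: set_table_halves[symmetric])
  then obtain e where "u \<in> set (table_half k e t)" by blast
  moreover have "length (table_half k e t) = 2^k"
    using Suc.prems(1) by (rule length_table_half)
  ultimately obtain xs where xs: "length xs = k" "table_fun k (table_half k e t) (nth xs) = u"
    using Suc.IH by blast
  have "nth (e # xs) \<circ> Suc = nth xs" by auto
  then have "length (e # xs) = Suc k \<and> table_fun (Suc k) t (nth (e # xs)) = u"
    using xs by simp
  then show ?case by (rule exI)
qed

lemma table_fun_cong: "(\<And>i. i < k \<Longrightarrow> a i = b i) \<Longrightarrow> table_fun k t a = table_fun k t b"
proof (induction k arbitrary: t a b)
  case 0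
  then show ?case by simp
next
  case (Suc k)
  have "table_fun k (table_half k (a 0) t) (a \<circ> Suc) = table_fun k (table_half k (a 0) t) (b \<circ> Suc)"
    by (rule Suc.IH) (simp add: Suc.prems)
  then show ?case using Suc.prems[of 0] by simp
qed

lemma depends_only_table_fun: "depends_only k (table_fun k t)"
  unfolding depends_only_def using table_fun_cong by blast

lemma table_fun_Suc_shift:
  "table_fun (Suc k) t (\<lambda>i. if i = 0 then e else a (i - 1)) = table_fun k (table_half k e t) a"
proof -
  have "(\<lambda>i. if i = 0 then e else a (i - 1)) \<circ> Suc = a" by auto
  then show ?thesis by simp
qed

lemma subst1_table_fun: "subst1 (table_fun (Suc k) t) e = table_fun k (table_half k e t)"
  unfolding subst1_def table_fun_Suc_shift ..

lemma table_fun_inject: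
  "length t = 2^k \<Longrightarrow> length u = 2^k \<Longrightarrow> table_fun k t = table_fun k u \<Longrightarrow> t = u"
proof (induction k arbitrary: t u)
  case 0
  then obtain x y where "t = [x]" "u = [y]"
    by (auto simp: length_Suc_conv)
  then show ?case using fun_cong[OF "0.prems"(3)] by simp
next
  case (Suc k)
  have "table_half k e t = table_half k e u" for e
  proof (rule Suc.IH)
    show "table_fun k (table_half k e t) = table_fun k (table_half k e u)"
    proof
      fix a
      show "table_fun k (table_half k e t) a = table_fun k (table_half k e u) a"
        using fun_cong[OF Suc.prems(3), of "\<lambda>i. if i = 0 then e else a (i - 1)"]
        by (simp only: table_fun_Suc_shift)
    qed
  qed (simp_all add: length_table_half Suc.prems)
  then show ?case by (metis table_halves_append)
qed

lemma table_fun_eq_iff_distinct: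
  assumes "distinct t" "length t = 2^k"
  shows "table_fun k t a = table_fun k t b \<longleftrightarrow> (\<forall>i<k. a i = b i)"
  using assms
proof (induction k arbitrary: t a b)
  case 0
  then show ?case by simp
next
  case (Suc k)
  have halves: "distinct (table_half k e t)" "length (table_half k e t) = 2^k" for e
    using Suc.prems by (simp_all add: table_half_def)
  have "a 0 = b 0" if "table_fun (Suc k) t a = table_fun (Suc k) t b"
  proof (rule ccontr)
    assume "a 0 \<noteq> b 0"
    moreover have "set (table_half k False t) \<inter> set (table_half k True t) = {}"
      using Suc.prems(1) table_halves_append[of k t] by (metis distinct_append)
    ultimately have "set (table_half k (a 0) t) \<inter> set (table_half k (b 0) t) = {}"
      by (cases "a 0") auto
    moreover have "table_fun (Suc k) t a \<in> set (table_half k (a 0) t)"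
      using table_fun_in_set[OF halves(2)] by simp
    moreover have "table_fun (Suc k) t b \<in> set (table_half k (b 0) t)"
      using table_fun_in_set[OF halves(2)] by simp
    ultimately show False using that by auto
  qed
  moreover have "table_fun (Suc k) t a = table_fun (Suc k) t b \<longleftrightarrow> (\<forall>i<k. a (Suc i) = b (Suc i))"
    if "a 0 = b 0"
    using that Suc.IH[OF halves] by simp
  ultimately show ?case
    by (auto simp: All_less_Suc2)
qed

lemma table_fun_list_all2:
  "list_all2 R t u \<Longrightarrow> length t = 2^k \<Longrightarrow> R (table_fun k t a) (table_fun k u a)"
proof (induction k arbitrary: t u a)
  case 0
  then show ?case by (cases t; cases u) auto
next
  case (Suc k)
  have "list_all2 R (table_half k (a 0) t) (table_half k (a 0) u)"
    using Suc.prems(1) by (simp add: table_half_def)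
  then show ?case
    using Suc.IH length_table_half[OF Suc.prems(2)] by simp
qed

lemma monotone_table_table_fun:
  assumes "reflp R" "transp R" "monotone_table R k t" "length t = 2^k" "\<And>i. i < k \<Longrightarrow> a i \<le> b i"
  shows "R (table_fun k t a) (table_fun k t b)"
  using assms(3-)
proof (induction k arbitrary: t a b)
  case 0
  then show ?case using \<open>reflp R\<close> by (simp add: reflpD)
next
  case (Suc k)
  let ?a = "a \<circ> Suc" and ?b = "b \<circ> Suc"
  have "R (table_fun k (table_half k (a 0) t) ?a) (table_fun k (table_half k (a 0) t) ?b)"
  proof (rule Suc.IH)
    show "monotone_table R k (table_half k (a 0) t)"
      using Suc.prems(1) by (cases "a 0") simp_all
    show "?a i \<le> ?b i" if "i < k" for i
      using Suc.prems(3)[of "Suc i"] that by simp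
  qed (simp add: Suc.prems length_table_half)
  moreover have "R (table_fun k (table_half k (a 0) t) ?b) (table_fun k (table_half k (b 0) t) ?b)"
  proof (cases "a 0 = b 0")
    case True
    then show ?thesis using \<open>reflp R\<close> by (simp add: reflpD)
  next
    case False
    then have "\<not> a 0" "b 0" using Suc.prems(3)[of 0] by auto
    moreover have "R (table_fun k (table_half k False t) ?b) (table_fun k (table_half k True t) ?b)"
      by (rule table_fun_list_all2) (use Suc.prems in \<open>simp_all add: length_table_half\<close>)
    ultimately show ?thesis by simp
  qed
  ultimately show ?case using \<open>transp R\<close> by (simp add: transpD)
qed

lemma length_table_of: "length (table_of k f) = 2^k"
  by (induction k arbitrary: f) simp_all

lemma depends_only_subst1:
  assumes "depends_only (Suc k) f"
  shows "depends_only k (subst1 f e)"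
  unfolding depends_only_def
proof (intro allI impI)
  fix a b :: "nat \<Rightarrow> bool"
  assume ab: "\<forall>i<k. a i = b i"
  let ?a = "\<lambda>i. if i = 0 then e else a (i - 1)" and ?b = "\<lambda>i. if i = 0 then e else b (i - 1)"
  have "\<forall>i<Suc k. ?a i = ?b i"
  proof (intro allI impI)
    fix i
    assume "i < Suc k"
    then show "?a i = ?b i" using ab by (cases i) auto
  qed
  then have "f ?a = f ?b"
    by (rule assms[unfolded depends_only_def, THEN spec, THEN spec, THEN mp])
  then show "subst1 f e a = subst1 f e b"
    by (simp only: subst1_def)
qed

lemma monotone_bf_subst1:
  assumes "monotone_bf f"
  shows "monotone_bf (subst1 f e)"
  unfolding monotone_bf_def
proof (intro allI impI)
  fix a b :: "nat \<Rightarrow> bool"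
  assume ab: "\<forall>i. a i \<le> b i"
  let ?a = "\<lambda>i. if i = 0 then e else a (i - 1)" and ?b = "\<lambda>i. if i = 0 then e else b (i - 1)"
  have "\<forall>i. ?a i \<le> ?b i"
    using ab by simp
  then have "f ?a \<le> f ?b"
    by (rule assms[unfolded monotone_bf_def, THEN spec, THEN spec, THEN mp])
  then show "subst1 f e a \<le> subst1 f e b"
    by (simp only: subst1_def)
qed

lemma subst1_False_le_True:
  assumes "monotone_bf f"
  shows "subst1 f False \<le> subst1 f True"
proof (rule le_funI)
  fix a :: "nat \<Rightarrow> bool"
  let ?a = "\<lambda>i. if i = 0 then False else a (i - 1)" and ?b = "\<lambda>i. if i = 0 then True else a (i - 1)"
  have "\<forall>i. ?a i \<le> ?b i"
    by simp
  then have "f ?a \<le> f ?b"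
    by (rule assms[unfolded monotone_bf_def, THEN spec, THEN spec, THEN mp])
  then show "subst1 f False a \<le> subst1 f True a"
    by (simp only: subst1_def)
qed

lemma table_half_table_of: "table_half k e (table_of (Suc k) f) = table_of k (subst1 f e)"
  by (cases e) (simp_all add: table_half_def length_table_of)

lemma table_fun_table_of: "depends_only k f \<Longrightarrow> table_fun k (table_of k f) = f"
proof (induction k arbitrary: f)
  case 0
  then show ?case by (auto simp: depends_only_def)
next
  case (Suc k)
  show ?case
  proof
    fix a :: "nat \<Rightarrow> bool"
    have shift: "(\<lambda>i. if i = 0 then a 0 else (a \<circ> Suc) (i - 1)) = a" by auto
    have "table_fun (Suc k) (table_of (Suc k) f) a = table_fun k (table_of k (subst1 f (a 0))) (a \<circ> Suc)"
      by (simp only: table_fun.simps table_half_table_of)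
    also have "\<dots> = subst1 f (a 0) (a \<circ> Suc)"
      using Suc.IH[OF depends_only_subst1[OF Suc.prems]] by simp
    also have "\<dots> = f a"
      unfolding subst1_def shift ..
    finally show "table_fun (Suc k) (table_of (Suc k) f) a = f a" .
  qed
qed

lemma table_of_mono: "g \<le> h \<Longrightarrow> list_all2 (\<le>) (table_of k g) (table_of k h)"
proof (induction k arbitrary: g h)
  case 0
  then show ?case by (simp add: le_fun_def)
next
  case (Suc k)
  have "subst1 g e \<le> subst1 h e" for e
    using Suc.prems by (simp add: subst1_def le_fun_def)
  then show ?case
    unfolding table_of.simps by (intro list_all2_appendI Suc.IH)
qed

lemma monotone_table_table_of: "monotone_bf f \<Longrightarrow> monotone_table (\<le>) k (table_of k f)"
proof (induction k arbitrary: f)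
  case 0
  then show ?case by simp
next
  case (Suc k)
  then show ?case
    unfolding monotone_table.simps table_half_table_of
    by (intro conjI Suc.IH monotone_bf_subst1 table_of_mono subst1_False_le_True)
qed

lemma table_fun_in_Fminus:
  assumes "length t = 2^k" "monotone_table (\<le>) k t" "True \<in> set t"
  shows "table_fun k t \<in> Fminus k"
proof -
  have "monotone_bf (table_fun k t)"
    unfolding monotone_bf_def
  proof (intro allI impI)
    fix a b :: "nat \<Rightarrow> bool"
    assume "\<forall>i. a i \<le> b i"
    then show "table_fun k t a \<le> table_fun k t b"
      by (intro monotone_table_table_fun[of "(\<le>)", OF _ _ assms(2,1)]) simp_all
  qed
  moreover obtain xs where "table_fun k t (nth xs)"
    using table_fun_surj[OF assms(1,3)] by blast
  then have "table_fun k t \<noteq> (\<lambda>_. False)" by auto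
  ultimately show ?thesis
    unfolding Fminus_def F_def using depends_only_table_fun by simp
qed

lemma Fminus_table_of:
  assumes "f \<in> Fminus k"
  shows "table_fun k (table_of k f) = f" "monotone_table (\<le>) k (table_of k f)" "True \<in> set (table_of k f)"
proof -
  show table: "table_fun k (table_of k f) = f"
    using assms by (simp add: Fminus_def F_def table_fun_table_of)
  show "monotone_table (\<le>) k (table_of k f)"
    using assms by (simp add: Fminus_def F_def monotone_table_table_of)
  obtain a where "f a"
    using assms by (auto simp: Fminus_def)
  moreover have "table_fun k (table_of k f) a \<in> set (table_of k f)"
    by (rule table_fun_in_set) (rule length_table_of)
  ultimately show "True \<in> set (table_of k f)"
    using table by simp
qed

definition phi_tables :: "bool list list" where
  "phi_tables = [[False,False,False,False,False,False,False,False,False,False,False,False,False,False,False,True],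
    [False,False,False,False,False,False,False,False,False,False,False,False,False,True,True,True],
    [False,False,False,False,False,False,False,False,False,False,False,False,False,False,True,True],
    [False,False,False,False,False,False,False,True,False,False,False,True,False,True,True,True],
    [False,False,False,False,False,False,False,False,False,False,False,True,False,False,False,True],
    [False,False,False,False,False,False,False,False,False,False,False,True,True,True,True,True],
    [False,False,False,False,False,False,False,False,False,False,True,True,False,False,True,True],
    [False,False,False,False,False,False,True,True,False,True,True,True,True,True,True,True],
    [False,False,False,False,False,False,False,True,False,False,False,False,False,False,False,True],
    [False,False,False,False,False,False,False,True,False,False,False,False,False,True,True,True],
    [False,False,False,False,False,False,False,True,False,False,False,False,False,False,True,True],
    [False,False,False,False,False,False,False,True,False,False,True,True,False,True,True,True],
    [False,False,False,False,False,False,False,True,False,True,False,True,False,True,False,True],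
    [False,False,False,True,False,False,False,True,False,True,False,True,True,True,True,True],
    [False,False,False,False,False,False,False,True,False,True,True,True,False,True,True,True],
    [False,True,False,True,False,True,True,True,True,True,True,True,True,True,True,True],
    [False,False,False,False,False,False,False,False,False,False,False,True,False,False,True,True],
    [False,False,False,False,False,False,False,False,False,True,False,True,False,True,True,True],
    [False,False,False,False,False,False,False,False,False,False,False,True,False,True,True,True],
    [False,False,False,False,False,True,False,True,True,True,True,True,True,True,True,True],
    [False,False,False,False,False,False,False,True,False,False,True,True,False,False,True,True],
    [False,False,False,False,False,False,False,True,False,True,True,True,True,True,True,True],
    [False,False,False,False,False,False,False,True,False,False,True,True,True,True,True,True],
    [False,False,False,False,True,True,True,True,True,True,True,True,True,True,True,True],
    [False,False,False,False,False,False,False,True,False,False,False,True,False,False,True,True],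
    [False,False,False,False,False,False,False,True,False,True,False,True,False,True,True,True],
    [False,False,False,False,False,False,False,True,False,False,False,True,True,True,True,True],
    [False,False,False,True,False,True,False,True,True,True,True,True,True,True,True,True],
    [False,False,False,False,False,False,False,True,True,True,True,True,True,True,True,True],
    [False,True,False,True,False,True,False,True,True,True,True,True,True,True,True,True],
    [False,True,False,True,True,True,True,True,True,True,True,True,True,True,True,True],
    [True,True,True,True,True,True,True,True,True,True,True,True,True,True,True,True]]"

definition phi :: "bool list \<Rightarrow> (nat \<Rightarrow> bool) \<Rightarrow> bool" where
  "phi x = table_fun 4 (table_fun 5 phi_tables (nth x))"

lemma length_phi_tables: "length phi_tables = 2^5"
  by (simp add: phi_tables_def)

lemma distinct_phi_tables: "distinct phi_tables"
  by (simp add: phi_tables_def)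

lemma phi_tables_entries:
  "u \<in> set phi_tables \<Longrightarrow> length u = 2^4 \<and> monotone_table (\<le>) 4 u \<and> True \<in> set u"
  by (simp add: phi_tables_def table_half_def numeral_eq_Suc, elim disjE) simp_all

lemma phi_tables_monotone: "monotone_table (list_all2 (\<le>)) 5 phi_tables"
  by (simp add: phi_tables_def table_half_def numeral_eq_Suc)

lemma phi_tables_restrictions:
  "\<forall>t\<in>set (List.n_lists (2^3) [False, True]). monotone_table (\<le>) 3 t \<and> True \<in> set t
     \<longrightarrow> (\<exists>u\<in>set phi_tables. \<exists>e. t = table_half 3 e u)"
  by (simp add: phi_tables_def table_half_def numeral_eq_Suc ex_bool_eq)

lemma phi_table_in_phi_tables: "table_fun 5 phi_tables a \<in> set phi_tables"
  by (rule table_fun_in_set) (rule length_phi_tables)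

lemma phi_in_Fminus: "phi x \<in> Fminus 4"
  unfolding phi_def
  using phi_tables_entries[OF phi_table_in_phi_tables] by (blast intro: table_fun_in_Fminus)

lemma phi_mono:
  assumes "x \<in> cube 5" "y \<in> cube 5" "cube_le x y"
  shows "phi x \<le> phi y"
proof -
  have "reflp (list_all2 ((\<le>) :: bool \<Rightarrow> bool \<Rightarrow> bool))"
    by (simp add: reflpI list_all2_refl)
  moreover have "transp (list_all2 ((\<le>) :: bool \<Rightarrow> bool \<Rightarrow> bool))"
  proof (rule transpI)
    fix xs ys zs :: "bool list"
    assume "list_all2 (\<le>) xs ys" "list_all2 (\<le>) ys zs"
    then show "list_all2 (\<le>) xs zs"
      by (rule list_all2_trans[rotated]) (rule order_trans)
  qed
  moreover have "x ! i \<le> y ! i" if "i < 5" for i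
    using assms that list_all2_nthD[of "(\<le>)" x y i] by (simp add: cube_def cube_le_def)
  ultimately have "list_all2 (\<le>) (table_fun 5 phi_tables (nth x)) (table_fun 5 phi_tables (nth y))"
    using monotone_table_table_fun[OF _ _ phi_tables_monotone length_phi_tables] by blast
  then show ?thesis
    unfolding phi_def le_fun_def
    using phi_tables_entries[OF phi_table_in_phi_tables] by (blast intro: table_fun_list_all2)
qed

lemma length_phi_table: "length (table_fun 5 phi_tables a) = 2^4"
  using phi_tables_entries[OF phi_table_in_phi_tables] by blast

lemma inj_on_phi: "inj_on phi (cube 5)"
proof (rule inj_onI)
  fix x y
  assume x: "x \<in> cube 5" and y: "y \<in> cube 5"
  assume "phi x = phi y"
  then have "table_fun 5 phi_tables (nth x) = table_fun 5 phi_tables (nth y)"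
    unfolding phi_def by (rule table_fun_inject[OF length_phi_table length_phi_table])
  then have "\<forall>i<5. x ! i = y ! i"
    by (simp add: table_fun_eq_iff_distinct[OF distinct_phi_tables length_phi_tables])
  then show "x = y"
    using x y by (simp add: cube_def nth_equalityI)
qed

lemma Fminus3_subst1_phi:
  assumes "f \<in> Fminus 3"
  shows "\<exists>x\<in>cube 5. \<exists>e. f = subst1 (phi x) e"
proof -
  have "table_of 3 f \<in> set (List.n_lists (2^3) [False, True])"
    by (auto simp: set_n_lists length_table_of)
  then obtain u e where u: "u \<in> set phi_tables" and "table_of 3 f = table_half 3 e u"
    using phi_tables_restrictions Fminus_table_of(2,3)[OF assms] by blast
  then have "f = subst1 (table_fun 4 u) e"
    using Fminus_table_of(1)[OF assms] subst1_table_fun[of 3 u e] by simp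
  moreover obtain x where "length x = 5" "table_fun 5 phi_tables (nth x) = u"
    using table_fun_surj[OF length_phi_tables u] by blast
  ultimately show ?thesis
    unfolding phi_def cube_def by auto
qed

theorem mainTheorem11:
  shows "arrow 5 4"
  unfolding arrow_def
proof (intro exI conjI)
  show "inj_on phi (cube 5)"
    by (fact inj_on_phi)
  show "phi ` cube 5 \<subseteq> Fminus 4"
    using phi_in_Fminus by blast
  show "\<forall>x\<in>cube 5. \<forall>y\<in>cube 5. cube_le x y \<longrightarrow> phi x \<le> phi y"
    using phi_mono by blast
  show "Fminus (4 - 1) \<subseteq> {subst1 (phi x) e | x e. x \<in> cube 5}"
    using Fminus3_subst1_phi by fastforce
qed

end
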